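(* Let $k\geq 0$ be fixed. There are constants $c_1$ and $q^*_k$ (depending on $k$) such that for all $q\geq q^*_k$ the following holds: if $\vec{x}=(x_0,\ldots,x_k)$ is a vector of nonnegative integers with $wt_q(\vec{x})\geq 2^q+c_1\binom{q}{k}$, then Paul has a winning strategy in the $q$-round pathological liar game with $k$ lies and initial state $\vec{x}$.
   Context: Pathological liar game: a state is a vector $\vec{x}=(x_0,\ldots,x_k)$ of nonnegative integers. In each of $q$ rounds Paul chooses a legal question $\vec{a}=(a_0,\ldots,a_k)$ with integers $0\leq a_i\leq x_i$, and Carole answers Y or N; the new state is $Y(\vec{x},\vec{a})=(a_0,\,a_1+x_0-a_0,\,\ldots,\,a_k+x_{k-1}-a_{k-1})$ or $N(\vec{x},\vec{a})=(x_0-a_0,\,x_1-a_1+a_0,\,\ldots,\,x_k-a_k+a_{k-1})$ respectively. Paul wins iff after $q$ rounds $\sum_i x_i\geq 1$. Weight: $wt_q(\vec{x})=\sum_{i=0}^k x_i\binom{q}{\leq k-i}$ where $\binom{q}{\leq m}=\sum_{j=0}^m\binom{q}{j}$. *)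

theory Defs
  imports Complex_Main
begin

text \<open>States and questions are lists of naturals of length k+1 (indices 0..k).\<close>

definition legal_question :: "nat list \<Rightarrow> nat list \<Rightarrow> bool" where
  "legal_question x a \<longleftrightarrow> length a = length x \<and> (\<forall>i<length x. a ! i \<le> x ! i)"

definition yes_state :: "nat list \<Rightarrow> nat list \<Rightarrow> nat list" where
  "yes_state x a = map (\<lambda>i. if i = 0 then a ! 0 else a ! i + (x ! (i - 1) - a ! (i - 1))) [0..<length x]"

definition no_state :: "nat list \<Rightarrow> nat list \<Rightarrow> nat list" where
  "no_state x a = map (\<lambda>i. if i = 0 then x ! 0 - a ! 0 else (x ! i - a ! i) + a ! (i - 1)) [0..<length x]"

fun paul_wins :: "nat \<Rightarrow> nat list \<Rightarrow> bool" where
  "paul_wins 0 x \<longleftrightarrow> sum_list x \<ge> 1"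
| "paul_wins (Suc q) x \<longleftrightarrow>
     (\<exists>a. legal_question x a \<and> paul_wins q (yes_state x a) \<and> paul_wins q (no_state x a))"

definition binom_le :: "nat \<Rightarrow> nat \<Rightarrow> nat" where
  "binom_le q m = (\<Sum>j\<le>m. q choose j)"

definition wt :: "nat \<Rightarrow> nat list \<Rightarrow> nat" where
  "wt q x = (\<Sum>i<length x. x ! i * binom_le q (length x - 1 - i))"

end

theory Submission
  imports Defs
begin

text \<open>Paul plays the splitting strategy for all but a constant number T of rounds: he halves
  every x i with i < k and lets the chips without lies left even out the weight of the two
  answers. Since wt (t + 1) x = wt t (yes_state x a) + wt t (no_state x a), the weight stays at
  least 2 ^ t as long as the two answers differ in weight by at most 1. This holds as soon as
  there are enough chips without lies left; the surplus c1 * (q choose k) pays for the first k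
  rounds, when there may be too few of them. Counting, for each chip, the answer sequences that
  take it to a given number of lies left shows that after q - T rounds at most 2k + 3 chips remain
  in each position i < k. Paul then gives each of these chips a codeword of a repetition code of
  minimum distance 2k + 1 and asks for the bits of the codewords; by the sphere-packing bound the
  weight condition survives every round.\<close>

section \<open>Partial sums of binomial coefficients\<close>

lemma binom_le_Suc: "binom_le t (Suc m) = binom_le t m + (t choose Suc m)"
  by (simp add: binom_le_def)

lemma binom_le_0 [simp]: "binom_le t 0 = 1"
  by (simp add: binom_le_def)

lemma binom_le_0_left [simp]: "binom_le 0 m = 1"
  by (induction m) (auto simp: binom_le_Suc)

lemma binom_le_pos [simp]: "0 < binom_le t m"
  by (induction m) (auto simp: binom_le_Suc)

lemma binom_le_Suc_Suc: "binom_le (Suc t) (Suc m) = binom_le t (Suc m) + binom_le t m"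
  by (induction m) (simp_all add: binom_le_Suc)

lemma binom_le_double: "binom_le (Suc t) m + (t choose m) = 2 * binom_le t m"
proof (cases m)
  case (Suc m')
  then show ?thesis
    using binom_le_Suc_Suc[of t m'] binom_le_Suc[of t m'] by simp
qed simp

lemma binom_le_le_Suc: "binom_le t m \<le> binom_le (Suc t) m"
  by (cases m) (simp_all add: binom_le_Suc_Suc)

lemma binom_le_mono: "t \<le> t' \<Longrightarrow> m \<le> m' \<Longrightarrow> binom_le t m \<le> binom_le t' m'"
proof -
  assume "t \<le> t'" "m \<le> m'"
  have "binom_le t m \<le> binom_le t' m"
    using \<open>t \<le> t'\<close> by (induction t' rule: dec_induct) (auto intro: le_trans binom_le_le_Suc)
  also have "\<dots> \<le> binom_le t' m'"
    unfolding binom_le_def using \<open>m \<le> m'\<close> by (intro sum_mono2) auto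
  finally show ?thesis .
qed

lemma binom_le_1_le: "binom_le 1 m \<le> 2"
  by (cases m) (simp_all add: binom_le_Suc_Suc)

lemma binom_le_le_pow: "binom_le q m \<le> (q + 1) ^ m"
proof (induction m)
  case (Suc m)
  have "q choose Suc m \<le> q ^ Suc m"
  proof (cases "Suc m \<le> q")
    case True
    then show ?thesis by (rule binomial_le_pow)
  qed (simp add: binomial_eq_0)
  also have "\<dots> \<le> q * (q + 1) ^ m"
    by (simp add: power_mono)
  finally show ?case
    using Suc by (simp add: binom_le_Suc)
qed simp

lemma binom_le_le_choose: "2 * m \<le> q \<Longrightarrow> binom_le q m \<le> (m + 1) * (q choose m)"
proof -
  assume "2 * m \<le> q"
  then have "binom_le q m \<le> (\<Sum>j\<le>m. q choose m)"
    unfolding binom_le_def by (intro sum_mono binomial_mono) auto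
  then show ?thesis by simp
qed

lemma pow_le_pow_mult_choose:
  assumes "1 \<le> e" "e \<le> k" "e \<le> n"
  shows "n ^ e \<le> k ^ e * (n choose e)"
proof -
  have "(real n / real k) ^ e \<le> (real n / real e) ^ e"
    using assms by (intro power_mono divide_left_mono) auto
  also have "\<dots> \<le> real (n choose e)"
    using binomial_ge_n_over_k_pow_k[of e n] assms by simp
  finally have "real n ^ e \<le> real k ^ e * real (n choose e)"
    using assms by (simp add: power_divide divide_le_eq mult.commute)
  then show ?thesis
    by (metis of_nat_le_iff of_nat_mult of_nat_power)
qed

lemma eventually_poly_le_pow2: "\<forall>\<^sub>F n in sequentially. c * (n + 1) ^ d \<le> (2::nat) ^ n"
proof -
  define K where "K = c * 2 ^ d * (d + 1) ^ (d + 1)"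
  have "c * (n + 1) ^ d \<le> 2 ^ n" if n: "d + 1 \<le> n" "K \<le> n" for n
  proof -
    have "real (c * (n + 1) ^ d) = real c * (1 + real n) ^ d"
      by simp
    also have "\<dots> \<le> real c * (2 * real n) ^ d"
      using n by (intro mult_left_mono power_mono) auto
    also have "\<dots> = real K * real n ^ d / real (d + 1) ^ (d + 1)"
    proof -
      define Z where "Z = real (d + 1) ^ (d + 1)"
      have "real K = real c * 2 ^ d * Z" "Z \<noteq> 0"
        unfolding K_def Z_def by (simp only: of_nat_mult of_nat_power of_nat_numeral, simp)
      then show ?thesis
        unfolding Z_def[symmetric] by (simp add: power_mult_distrib)
    qed
    also have "\<dots> \<le> real n * real n ^ d / real (d + 1) ^ (d + 1)"
      using n by (intro divide_right_mono mult_right_mono) auto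
    also have "\<dots> = (real n / real (d + 1)) ^ (d + 1)"
      by (simp add: power_divide)
    also have "\<dots> \<le> real (n choose (d + 1))"
      using binomial_ge_n_over_k_pow_k[of "d + 1" n] n by simp
    also have "\<dots> \<le> real (2 ^ n)"
      using binomial_le_pow2[of n "d + 1"] by (simp only: of_nat_le_iff)
    finally show ?thesis by (simp only: of_nat_le_iff)
  qed
  then show ?thesis
    unfolding eventually_sequentially by (intro exI[of _ "max (d + 1) K"]) auto
qed

text \<open>Binomial coefficients with an integer lower index that vanish at negative indices, so
  that Pascal's rule holds without side conditions.\<close>

definition ichoose :: "nat \<Rightarrow> int \<Rightarrow> nat" where
  "ichoose t m = (if m < 0 then 0 else t choose nat m)"

definition ibinom_le :: "nat \<Rightarrow> int \<Rightarrow> nat" where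
  "ibinom_le t m = (if m < 0 then 0 else binom_le t (nat m))"

lemma int_cases_neg_0_Suc:
  fixes m :: int
  obtains "m < 0" | "m = 0" | n where "m = int (Suc n)"
proof (cases m rule: int_cases)
  case (nonneg n)
  then show ?thesis using that by (cases n) auto
qed (use that in simp)

lemma nat_1_plus_int [simp]: "nat (1 + int n) = Suc n"
  by simp

lemma ichoose_Suc: "ichoose (Suc t) m = ichoose t m + ichoose t (m - 1)"
  by (cases m rule: int_cases_neg_0_Suc) (simp_all add: ichoose_def)

lemma ibinom_le_Suc: "ibinom_le (Suc t) m = ibinom_le t m + ibinom_le t (m - 1)"
  by (cases m rule: int_cases_neg_0_Suc) (simp_all add: ibinom_le_def binom_le_Suc_Suc)

lemma ibinom_le_eq: "ibinom_le t m = ibinom_le t (m - 1) + ichoose t m"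
  by (cases m rule: int_cases_neg_0_Suc) (simp_all add: ibinom_le_def ichoose_def binom_le_Suc)

lemma sum_ichoose_le: "(\<Sum>i<n. ichoose r (m - int i)) \<le> ibinom_le r m"
proof (induction n arbitrary: m)
  case (Suc n)
  have "(\<Sum>i<Suc n. ichoose r (m - int i)) = ichoose r m + (\<Sum>i<n. ichoose r (m - 1 - int i))"
    by (subst sum.lessThan_Suc_shift) (simp add: algebra_simps)
  also have "\<dots> \<le> ichoose r m + ibinom_le r (m - 1)"
    using Suc.IH by simp
  finally show ?case
    using ibinom_le_eq[of r m] by simp
qed simp

section \<open>Questions, answers and linear functionals of states\<close>

lemma length_yes_state [simp]: "length (yes_state x a) = length x"
  by (simp add: yes_state_def)

lemma length_no_state [simp]: "length (no_state x a) = length x"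
  by (simp add: no_state_def)

lemma yes_state_nth:
  "i < length x \<Longrightarrow> yes_state x a ! i = (if i = 0 then a ! 0 else a ! i + (x ! (i - 1) - a ! (i - 1)))"
  by (simp add: yes_state_def)

lemma no_state_nth:
  "i < length x \<Longrightarrow> no_state x a ! i = (if i = 0 then x ! 0 - a ! 0 else (x ! i - a ! i) + a ! (i - 1))"
  by (simp add: no_state_def)

lemma legal_question_complement:
  "legal_question x a \<Longrightarrow> legal_question x (map2 (-) x a)"
  by (simp add: legal_question_def)

lemma no_state_eq_yes_state_complement:
  assumes "legal_question x a"
  shows "no_state x a = yes_state x (map2 (-) x a)"
  using assms by (intro nth_equalityI) (auto simp: legal_question_def yes_state_nth no_state_nth)

lemma paul_wins_mono:
  assumes "paul_wins t x" "length y = length x" "\<forall>i<length x. x ! i \<le> y ! i"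
  shows "paul_wins t y"
  using assms
proof (induction t arbitrary: x y)
  case 0
  have "sum_list x \<le> sum_list y"
    unfolding sum_list_sum_nth "0.prems"(2) using "0.prems"(3) by (intro sum_mono) auto
  then show ?case using "0.prems"(1) by simp
next
  case (Suc t)
  from Suc.prems(1) obtain a where a: "legal_question x a"
    "paul_wins t (yes_state x a)" "paul_wins t (no_state x a)"
    by auto
  have "legal_question y a"
    using a(1) Suc.prems(2,3) unfolding legal_question_def by (auto intro: order_trans)
  moreover have "paul_wins t (yes_state y a)"
  proof (rule Suc.IH[OF a(2)])
    show "\<forall>i<length (yes_state x a). yes_state x a ! i \<le> yes_state y a ! i"
    proof (intro allI impI)
      fix i assume "i < length (yes_state x a)"
      then have "i < length x" "i - 1 < length x" by auto
      then show "yes_state x a ! i \<le> yes_state y a ! i"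
        using Suc.prems(2,3) by (simp add: yes_state_nth diff_le_mono)
    qed
  qed (use Suc.prems(2) in simp)
  moreover have "paul_wins t (no_state y a)"
  proof (rule Suc.IH[OF a(3)])
    show "\<forall>i<length (no_state x a). no_state x a ! i \<le> no_state y a ! i"
      using Suc.prems(2,3) by (simp add: no_state_nth diff_le_mono)
  qed (use Suc.prems(2) in simp)
  ultimately show ?case by auto
qed

definition lin_comb :: "(nat \<Rightarrow> int) \<Rightarrow> nat list \<Rightarrow> int" where
  "lin_comb f x = (\<Sum>i<length x. int (x ! i) * f i)"

lemma lin_comb_yes_state_eq_sum:
  assumes lx: "length x = Suc k" and a: "legal_question x a" and f: "f (Suc k) = 0"
  shows "lin_comb f (yes_state x a)
    = (\<Sum>i<Suc k. int (a ! i) * f i + (int (x ! i) - int (a ! i)) * f (Suc i))"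
proof -
  have le: "a ! i \<le> x ! i" if "i < Suc k" for i
    using a that lx by (simp add: legal_question_def)
  have "lin_comb f (yes_state x a) = int (a ! 0) * f 0 + (\<Sum>i<k. int (yes_state x a ! Suc i) * f (Suc i))"
    unfolding lin_comb_def length_yes_state lx by (subst sum.lessThan_Suc_shift) (simp add: yes_state_nth lx)
  also have "(\<Sum>i<k. int (yes_state x a ! Suc i) * f (Suc i)) =
      (\<Sum>i<k. int (a ! Suc i) * f (Suc i) + (int (x ! i) - int (a ! i)) * f (Suc i))"
  proof (rule sum.cong)
    fix i assume "i \<in> {..<k}"
    then have "yes_state x a ! Suc i = a ! Suc i + (x ! i - a ! i)" "a ! i \<le> x ! i"
      using le lx by (simp_all add: yes_state_nth)
    then show "int (yes_state x a ! Suc i) * f (Suc i) =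
        int (a ! Suc i) * f (Suc i) + (int (x ! i) - int (a ! i)) * f (Suc i)"
      by (simp add: of_nat_diff algebra_simps)
  qed simp
  also have "int (a ! 0) * f 0 + \<dots>
      = (\<Sum>i<Suc k. int (a ! i) * f i) + (\<Sum>i<k. (int (x ! i) - int (a ! i)) * f (Suc i))"
    using sum.lessThan_Suc_shift[of "\<lambda>i. int (a ! i) * f i" k] by (simp add: sum.distrib del: sum.lessThan_Suc)
  finally show ?thesis
    using f by (simp add: sum.distrib)
qed

lemma lin_comb_yes_state:
  assumes "length x = Suc k" "legal_question x a" "f (Suc k) = 0"
  shows "2 * lin_comb f (yes_state x a) = lin_comb (\<lambda>i. f i + f (Suc i)) x
     + (\<Sum>i<Suc k. (2 * int (a ! i) - int (x ! i)) * (f i - f (Suc i)))"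
proof -
  have "2 * lin_comb f (yes_state x a)
      = (\<Sum>i<Suc k. 2 * (int (a ! i) * f i + (int (x ! i) - int (a ! i)) * f (Suc i)))"
    using lin_comb_yes_state_eq_sum[where f=f, OF assms] by (simp add: sum_distrib_left)
  also have "\<dots> = (\<Sum>i<Suc k. int (x ! i) * (f i + f (Suc i))
      + (2 * int (a ! i) - int (x ! i)) * (f i - f (Suc i)))"
    by (simp add: algebra_simps)
  finally show ?thesis
    using assms(1) by (simp add: lin_comb_def sum.distrib)
qed

section \<open>The endgame: a repetition code\<close>

definition hamming :: "nat \<Rightarrow> (nat \<Rightarrow> bool) \<Rightarrow> (nat \<Rightarrow> bool) \<Rightarrow> nat" where
  "hamming t w w' = card {r. r < t \<and> w r \<noteq> w' r}"

lemma hamming_0 [simp]: "hamming 0 w w' = 0"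
  by (simp add: hamming_def)

lemma hamming_Suc: "hamming (Suc t) w w' = hamming t w w' + (if w t \<noteq> w' t then 1 else 0)"
proof -
  have "{r. r < Suc t \<and> w r \<noteq> w' r} = {r. r < t \<and> w r \<noteq> w' r} \<union> (if w t \<noteq> w' t then {t} else {})"
    by (auto simp: less_Suc_eq)
  then show ?thesis
    unfolding hamming_def by (simp add: card_Un_disjoint)
qed

text \<open>Chip u carries the word c u: it stands for a liar who answers c u s when s + 1 rounds are
  left, and l u is the number of lies it may still tell (negative once it is eliminated).\<close>

definition separated :: "nat \<Rightarrow> 'a set \<Rightarrow> ('a \<Rightarrow> nat \<Rightarrow> bool) \<Rightarrow> ('a \<Rightarrow> int) \<Rightarrow> bool" where
  "separated t S c l \<longleftrightarrow> (\<forall>u\<in>S. \<forall>v\<in>S. u \<noteq> v \<longrightarrow> 0 \<le> l u \<longrightarrow> 0 \<le> l v \<longrightarrow>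
      l u + l v + 1 \<le> int (hamming t (c u) (c v)))"

definition after_answer :: "nat \<Rightarrow> bool \<Rightarrow> ('a \<Rightarrow> nat \<Rightarrow> bool) \<Rightarrow> ('a \<Rightarrow> int) \<Rightarrow> 'a \<Rightarrow> int" where
  "after_answer s b c l u = (if c u s = b then l u else l u - 1)"

lemma separated_after_answer:
  assumes "separated (Suc t) S c l"
  shows "separated t S c (after_answer t b c l)"
  unfolding separated_def
proof (intro ballI impI)
  fix u v assume uv: "u \<in> S" "v \<in> S" "u \<noteq> v"
    and pos: "0 \<le> after_answer t b c l u" "0 \<le> after_answer t b c l v"
  have "0 \<le> l u" "0 \<le> l v"
    using pos by (auto simp: after_answer_def split: if_splits)
  with uv assms have "l u + l v + 1 \<le> int (hamming (Suc t) (c u) (c v))"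
    by (simp add: separated_def)
  then show "after_answer t b c l u + after_answer t b c l v + 1 \<le> int (hamming t (c u) (c v))"
    by (cases "c u t = c v t"; cases "c u t = b") (auto simp: after_answer_def hamming_Suc)
qed

lemma ibinom_le_after_answer:
  "ibinom_le (Suc t) (l u)
    = ibinom_le t (after_answer t True c l u) + ibinom_le t (after_answer t False c l u)"
  by (simp add: after_answer_def ibinom_le_Suc)

text \<open>The sphere-packing bound: the Hamming balls of radii l u around the words c u are
  disjoint.\<close>

lemma sum_ibinom_le_separated:
  assumes "finite S" "separated t S c l"
  shows "(\<Sum>u\<in>S. ibinom_le t (l u)) \<le> 2 ^ t"
  using assms(2)
proof (induction t arbitrary: l)
  case 0
  have "\<forall>u\<in>{u\<in>S. 0 \<le> l u}. \<forall>v\<in>{u\<in>S. 0 \<le> l u}. u = v"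
    using "0.prems" by (force simp: separated_def)
  then have "card {u\<in>S. 0 \<le> l u} \<le> 1"
    using assms(1) by (simp add: card_le_Suc0_iff_eq)
  moreover have "(\<Sum>u\<in>S. ibinom_le 0 (l u)) = card {u\<in>S. 0 \<le> l u}"
    using assms(1) by (simp add: ibinom_le_def sum.If_cases Int_def not_less)
  ultimately show ?case by simp
next
  case (Suc t)
  have "(\<Sum>u\<in>S. ibinom_le (Suc t) (l u))
      = (\<Sum>u\<in>S. ibinom_le t (after_answer t True c l u))
        + (\<Sum>u\<in>S. ibinom_le t (after_answer t False c l u))"
    by (simp add: ibinom_le_after_answer[where c = c] sum.distrib)
  also have "\<dots> \<le> 2 ^ t + 2 ^ t"
    by (intro add_mono Suc.IH separated_after_answer Suc.prems)
  finally show ?case by simp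
qed

text \<open>The state x consists of the chips in S and of n further chips without lies left,
  which need no word.\<close>

definition represents :: "nat \<Rightarrow> 'a set \<Rightarrow> ('a \<Rightarrow> int) \<Rightarrow> nat \<Rightarrow> nat list \<Rightarrow> bool" where
  "represents k S l n x \<longleftrightarrow> length x = Suc k \<and>
     (\<forall>i\<le>k. x ! i = card {u\<in>S. l u = int k - int i} + (if i = k then n else 0))"

definition code_question ::
  "nat \<Rightarrow> 'a set \<Rightarrow> ('a \<Rightarrow> nat \<Rightarrow> bool) \<Rightarrow> ('a \<Rightarrow> int) \<Rightarrow> nat \<Rightarrow> bool \<Rightarrow> nat \<Rightarrow> nat list" where
  "code_question k S c l s b p =
     map (\<lambda>i. card {u\<in>S. l u = int k - int i \<and> c u s = b} + (if i = k then p else 0)) [0..<Suc k]"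

lemma length_code_question [simp]: "length (code_question k S c l s b p) = Suc k"
  by (simp add: code_question_def)

lemma code_question_nth:
  "i \<le> k \<Longrightarrow> code_question k S c l s b p ! i
    = card {u\<in>S. l u = int k - int i \<and> c u s = b} + (if i = k then p else 0)"
  unfolding code_question_def by (simp del: upt_Suc)

lemma card_split_answer:
  assumes "finite S"
  shows "card {u\<in>S. l u = m} = card {u\<in>S. l u = m \<and> c u s = b} + card {u\<in>S. l u = m \<and> c u s \<noteq> b}"
  using assms by (subst card_Un_disjoint[symmetric]) (auto intro: arg_cong[where f = card])

lemma card_after_answer:
  assumes "finite S"
  shows "card {u\<in>S. after_answer s b c l u = m}
    = card {u\<in>S. l u = m \<and> c u s = b} + card {u\<in>S. l u = m + 1 \<and> c u s \<noteq> b}"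
  using assms
  by (subst card_Un_disjoint[symmetric]) (auto simp: after_answer_def intro: arg_cong[where f = card])

lemma legal_code_question:
  assumes "finite S" "represents k S l n x" "p \<le> n"
  shows "legal_question x (code_question k S c l s b p)"
  using assms card_split_answer[OF assms(1), of l _ c s b]
  by (auto simp: legal_question_def represents_def code_question_nth less_Suc_eq_le)

lemma complement_code_question:
  assumes "finite S" "represents k S l n x" "p \<le> n"
  shows "map2 (-) x (code_question k S c l s b p) = code_question k S c l s (\<not> b) (n - p)"
  using assms card_split_answer[OF assms(1), of l _ c s b]
  by (intro nth_equalityI) (auto simp: represents_def code_question_nth less_Suc_eq_le)

lemma represents_yes_state:
  assumes fin: "finite S" and lk: "\<forall>u\<in>S. l u \<le> int k" and r: "represents k S l n x" and p: "p \<le> n"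
  shows "represents k S (after_answer s b c l) p (yes_state x (code_question k S c l s b p))"
  unfolding represents_def
proof (intro conjI allI impI)
  let ?a = "code_question k S c l s b p"
  have lx: "length x = Suc k" using r by (simp add: represents_def)
  then show "length (yes_state x ?a) = Suc k" by simp
  fix i assume i: "i \<le> k"
  show "yes_state x ?a ! i = card {u\<in>S. after_answer s b c l u = int k - int i} + (if i = k then p else 0)"
  proof (cases "i = 0")
    case True
    have "{u\<in>S. l u = int k + 1 \<and> c u s \<noteq> b} = {}" using lk by force
    then have "card {u\<in>S. l u = int k + 1 \<and> c u s \<noteq> b} = 0" by (metis card.empty)
    then show ?thesis
      using True lx card_after_answer[OF fin, of s b c l "int k"]
      by (simp add: yes_state_nth code_question_nth)
  next
    case False
    then have m: "int k - int (i - 1) = int k - int i + 1" by simp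
    have "x ! (i - 1) = card {u\<in>S. l u = int k - int i + 1}"
      using r i False unfolding represents_def m[symmetric] by force
    moreover have "?a ! (i - 1) = card {u\<in>S. l u = int k - int i + 1 \<and> c u s = b}"
      using code_question_nth[of "i - 1" k S c l s b p] i False unfolding m by force
    ultimately show ?thesis
      using False i lx card_split_answer[OF fin, of l "int k - int i + 1" c s b]
        card_after_answer[OF fin, of s b c l "int k - int i"]
      by (simp add: yes_state_nth code_question_nth m)
  qed
qed

lemma paul_wins_represented:
  assumes fin: "finite S"
    and "\<forall>u\<in>S. l u \<le> int k" "separated t S c l" "represents k S l n x"
    and "2 ^ t \<le> n + (\<Sum>u\<in>S. ibinom_le t (l u))"
  shows "paul_wins t x"
  using assms(2-)
proof (induction t arbitrary: l n x)
  case 0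
  have r: "length x = Suc k"
      "\<And>i. i \<le> k \<Longrightarrow> x ! i = card {u\<in>S. l u = int k - int i} + (if i = k then n else 0)"
    using "0.prems"(3) by (simp_all add: represents_def)
  obtain i where i: "i \<le> k" "1 \<le> x ! i"
  proof (cases "n = 0")
    case True
    then obtain u where u: "u \<in> S" "0 \<le> l u"
      using "0.prems"(4) by (metis ibinom_le_def add_0 not_less not_one_le_zero power_0 sum.neutral)
    have "0 < card {v\<in>S. l v = l u}"
      using fin u by (auto simp: card_gt_0_iff)
    moreover have "int k - int (k - nat (l u)) = l u"
      using u "0.prems"(1) by auto
    ultimately show ?thesis
      using that[of "k - nat (l u)"] r(2)[of "k - nat (l u)"] by simp
  qed (use that[of k] r in simp)
  then have "x ! i \<le> sum_list x"
    using r(1) i(1) by (intro member_le_sum_list) simp_all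
  then show ?case using i by simp
next
  case (Suc t)
  note lk = Suc.prems(1) and sep = Suc.prems(2) and r = Suc.prems(3)
  define LY where "LY = (\<Sum>u\<in>S. ibinom_le t (after_answer t True c l u))"
  define LN where "LN = (\<Sum>u\<in>S. ibinom_le t (after_answer t False c l u))"
  have "2 ^ Suc t \<le> n + LY + LN"
    using Suc.prems(4) by (simp add: LY_def LN_def ibinom_le_after_answer[where c = c] sum.distrib)
  moreover have "LY \<le> 2 ^ t" "LN \<le> 2 ^ t"
    unfolding LY_def LN_def by (rule sum_ibinom_le_separated[OF fin separated_after_answer[OF sep]])+
  \<comment> \<open>Both parts of the packing sum are at most 2 ^ t, so the free chips can be split to
    keep the weight condition for either answer.\<close>
  moreover define p where "p = min n (2 ^ t - LY)"
  ultimately have p: "p \<le> n" "2 ^ t \<le> p + LY" "2 ^ t \<le> (n - p) + LN"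
    by auto
  have lk': "\<forall>u\<in>S. after_answer t b c l u \<le> int k" for b
    using lk by (force simp: after_answer_def)
  let ?a = "code_question k S c l t True p"
  have "paul_wins t (yes_state x ?a)"
    using Suc.IH[OF lk' separated_after_answer[OF sep] represents_yes_state[OF fin lk r p(1)]] p(2)
    by (simp add: LY_def)
  moreover have "paul_wins t (no_state x ?a)"
    using Suc.IH[OF lk' separated_after_answer[OF sep] represents_yes_state[OF fin lk r, of "n - p"]] p(3)
    by (simp add: no_state_eq_yes_state_complement legal_code_question[OF fin r p(1)]
        complement_code_question[OF fin r p(1)] LN_def)
  moreover have "legal_question x ?a"
    by (rule legal_code_question[OF fin r p(1)])
  ultimately show ?case by auto
qed

lemma hamming_block_code:
  assumes "n \<noteq> n'" "b * (n + 1) \<le> T"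
  shows "b \<le> hamming T (\<lambda>r. r div b = n) (\<lambda>r. r div b = n')"
proof -
  have "{b * n..<b * n + b} \<subseteq> {r. r < T \<and> (r div b = n) \<noteq> (r div b = n')}"
  proof
    fix r assume r: "r \<in> {b * n..<b * n + b}"
    then have "r div b = n"
      by (auto intro: div_nat_eqI simp: mult.commute)
    then show "r \<in> {r. r < T \<and> (r div b = n) \<noteq> (r div b = n')}"
      using r assms by auto
  qed
  then have "card {b * n..<b * n + b} \<le> hamming T (\<lambda>r. r div b = n) (\<lambda>r. r div b = n')"
    unfolding hamming_def by (intro card_mono) auto
  then show ?thesis by simp
qed

text \<open>Each chip in a position i < k gets its own codeword of a repetition code of minimum
  distance 2k + 1.\<close>

lemma paul_wins_few_liars:
  assumes lx: "length x = Suc k" and cap: "\<forall>i<k. x ! i \<le> C"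
    and T: "(2 * k + 1) * (k * C) \<le> T" and w: "2 ^ T \<le> wt T x"
  shows "paul_wins T x"
proof -
  define S where "S = (SIGMA i:{..<k}. {..<x ! i})"
  define c where "c = (\<lambda>(i, j) r. r div (2 * k + 1) = i * C + j)"
  define l where "l = (\<lambda>(i, j::nat). int k - int i)"
  have fin: "finite S" and lk: "\<forall>u\<in>S. l u \<le> int k"
    by (auto simp: S_def l_def)
  have sep: "separated T S c l"
    unfolding separated_def
  proof (intro ballI impI)
    fix u v assume uv: "u \<in> S" "v \<in> S" "u \<noteq> v"
    obtain i j i' j' where ij: "u = (i, j)" "v = (i', j')" "i < k" "j < C" "i' < k" "j' < C"
      using uv cap unfolding S_def by fastforce
    have "i * C + j \<noteq> i' * C + j'"
    proof
      assume "i * C + j = i' * C + j'"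
      then have "(i * C + j) div C = (i' * C + j') div C" "(i * C + j) mod C = (i' * C + j') mod C"
        by simp_all
      moreover have "0 < C" using ij by simp
      ultimately show False using ij uv(3) by simp
    qed
    moreover have "(2 * k + 1) * (i * C + j + 1) \<le> T"
    proof -
      have "i * C + j + 1 \<le> Suc i * C"
        using ij by simp
      also have "\<dots> \<le> k * C"
        using ij by (intro mult_le_mono1) simp
      finally show ?thesis
        using T by (meson le_trans mult_le_mono2)
    qed
    ultimately have "2 * k + 1 \<le> hamming T (c u) (c v)"
      unfolding c_def ij by (simp add: hamming_block_code)
    moreover have "l u \<le> int k" "l v \<le> int k"
      using lk uv by auto
    ultimately show "l u + l v + 1 \<le> int (hamming T (c u) (c v))"
      by linarith
  qed
  have rep: "represents k S l (x ! k) x"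
  proof -
    have "{u\<in>S. l u = int k - int i} = (if i < k then {i} \<times> {..<x ! i} else {})" if "i \<le> k" for i
      using that by (auto simp: S_def l_def)
    then show ?thesis
      using lx by (simp add: represents_def card_cartesian_product)
  qed
  have "(\<Sum>u\<in>S. ibinom_le T (l u)) = (\<Sum>(i, j)\<in>S. binom_le T (k - i))"
    by (rule sum.cong) (auto simp: S_def l_def ibinom_le_def nat_diff_distrib)
  also have "\<dots> = (\<Sum>i<k. \<Sum>j<x ! i. binom_le T (k - i))"
    unfolding S_def by (rule sum.Sigma[symmetric]) auto
  finally have "(\<Sum>u\<in>S. ibinom_le T (l u)) = (\<Sum>i<k. x ! i * binom_le T (k - i))"
    by simp
  then show ?thesis
    using paul_wins_represented[OF fin lk sep rep] w lx by (simp add: wt_def)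
qed

section \<open>The splitting strategy\<close>

lemma wt_eq_lin_comb:
  "length x = Suc k \<Longrightarrow> int (wt t x) = lin_comb (\<lambda>i. int (ibinom_le t (int k - int i))) x"
  unfolding wt_def lin_comb_def ibinom_le_def by (auto intro!: sum.cong simp: nat_diff_distrib)

definition imbalance :: "nat \<Rightarrow> nat \<Rightarrow> nat list \<Rightarrow> nat list \<Rightarrow> int" where
  "imbalance k t x a = (\<Sum>i<Suc k. (2 * int (a ! i) - int (x ! i)) * int (t choose (k - i)))"

lemma wt_yes_state:
  assumes "length x = Suc k" "legal_question x a"
  shows "2 * int (wt t (yes_state x a)) = int (wt (Suc t) x) + imbalance k t x a"
proof -
  let ?f = "\<lambda>i. int (ibinom_le t (int k - int i))"
  have "?f i + ?f (Suc i) = int (ibinom_le (Suc t) (int k - int i))" for i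
    using ibinom_le_Suc[of t "int k - int i"] by (simp add: algebra_simps)
  moreover have "?f i - ?f (Suc i) = int (t choose (k - i))" if "i < Suc k" for i
    using ibinom_le_eq[of t "int k - int i"] that by (simp add: ichoose_def algebra_simps nat_diff_distrib)
  moreover have "?f (Suc k) = 0"
    by (simp add: ibinom_le_def)
  ultimately show ?thesis
    using lin_comb_yes_state[of x k a ?f] assms wt_eq_lin_comb[of x k] wt_eq_lin_comb[of "yes_state x a" k]
    by (simp add: imbalance_def)
qed

definition balanced :: "nat \<Rightarrow> nat \<Rightarrow> nat list \<Rightarrow> nat list \<Rightarrow> bool" where
  "balanced k t x a \<longleftrightarrow> legal_question x a \<and>
     (\<forall>i<k. \<bar>2 * int (a ! i) - int (x ! i)\<bar> \<le> 1) \<and>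
     \<bar>2 * int (a ! k) - int (x ! k)\<bar> \<le> int (binom_le t k) \<and>
     \<bar>imbalance k t x a\<bar> \<le> int (binom_le t k) \<and>
     (binom_le t k \<le> x ! k \<longrightarrow> \<bar>imbalance k t x a\<bar> \<le> 1)"

lemma balanced_complement:
  assumes lx: "length x = Suc k" and a: "balanced k t x a"
  shows "balanced k t x (map2 (-) x a)"
proof -
  have legal: "legal_question x a"
    using a by (simp add: balanced_def)
  then have neg: "2 * int (map2 (-) x a ! i) - int (x ! i) = - (2 * int (a ! i) - int (x ! i))"
    if "i < Suc k" for i
    using that lx by (simp add: legal_question_def of_nat_diff)
  have "imbalance k t x (map2 (-) x a)
      = (\<Sum>i<Suc k. - ((2 * int (a ! i) - int (x ! i)) * int (t choose (k - i))))"
    unfolding imbalance_def by (rule sum.cong) (simp_all only: lessThan_iff neg mult_minus_left)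
  then have "imbalance k t x (map2 (-) x a) = - imbalance k t x a"
    by (simp only: sum_negf imbalance_def)
  then show ?thesis
    using a legal_question_complement[OF legal] neg by (simp add: balanced_def abs_minus_commute)
qed

definition parity_weight :: "nat \<Rightarrow> nat \<Rightarrow> nat list \<Rightarrow> nat" where
  "parity_weight k t x = (\<Sum>i<k. (x ! i mod 2) * (t choose (k - i)))"

text \<open>Halve every x i with i < k; the chips without lies left compensate, as far as they can,
  for the weight imbalance parity_weight caused by the odd entries.\<close>

definition split_question :: "nat \<Rightarrow> nat \<Rightarrow> nat list \<Rightarrow> nat list" where
  "split_question k t x = map (\<lambda>i. if i < k then x ! i div 2
     else min (x ! k) ((x ! k + parity_weight k t x) div 2)) [0..<Suc k]"

lemma length_split_question [simp]: "length (split_question k t x) = Suc k"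
  by (simp add: split_question_def)

lemma split_question_nth:
  "i \<le> k \<Longrightarrow> split_question k t x ! i = (if i < k then x ! i div 2
     else min (x ! k) ((x ! k + parity_weight k t x) div 2))"
  unfolding split_question_def by (simp del: upt_Suc)

lemma parity_weight_le: "parity_weight k t x \<le> binom_le t k"
proof -
  have "parity_weight k t x \<le> (\<Sum>i<k. t choose (k - i))"
    unfolding parity_weight_def by (intro sum_mono) (simp add: mod_less_eq_dividend mod2_eq_if)
  also have "\<dots> = (\<Sum>i<k. ichoose t (int k - int i))"
    by (intro sum.cong) (auto simp: ichoose_def nat_diff_distrib)
  also have "\<dots> \<le> (\<Sum>i<Suc k. ichoose t (int k - int i))"
    by simp
  also have "\<dots> \<le> ibinom_le t (int k)"
    by (rule sum_ichoose_le)
  finally show ?thesis by (simp add: ibinom_le_def)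
qed

lemma min_half_sum_bounds:
  fixes X P B :: nat
  assumes "P \<le> B" "1 \<le> B"
  shows "\<bar>2 * int (min X ((X + P) div 2)) - int X\<bar> \<le> int B"
    and "\<bar>2 * int (min X ((X + P) div 2)) - int X - int P\<bar> \<le> int B"
    and "B \<le> X \<Longrightarrow> \<bar>2 * int (min X ((X + P) div 2)) - int X - int P\<bar> \<le> 1"
proof -
  define h where "h = (X + P) div 2"
  define d where "d = 2 * int (min X h) - int X"
  have "2 * h = X + P \<or> 2 * h + 1 = X + P"
    unfolding h_def by presburger
  then have "d = int X \<and> X \<le> P \<or> (d = int P \<or> d = int P - 1) \<and> P < X"
    unfolding d_def by (cases "X \<le> h") (simp_all add: min_def, linarith+)
  then show "\<bar>2 * int (min X ((X + P) div 2)) - int X\<bar> \<le> int B"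
    "\<bar>2 * int (min X ((X + P) div 2)) - int X - int P\<bar> \<le> int B"
    "B \<le> X \<Longrightarrow> \<bar>2 * int (min X ((X + P) div 2)) - int X - int P\<bar> \<le> 1"
    using assms unfolding d_def h_def by auto
qed

lemma imbalance_split_question:
  "imbalance k t x (split_question k t x)
     = 2 * int (split_question k t x ! k) - int (x ! k) - int (parity_weight k t x)"
proof -
  have "2 * int (x ! i div 2) - int (x ! i) = - int (x ! i mod 2)" for i
    by presburger
  then show ?thesis
    by (simp add: imbalance_def parity_weight_def split_question_nth sum_negf[symmetric] of_nat_mult)
qed

lemma split_question_balanced:
  assumes "length x = Suc k"
  shows "balanced k t x (split_question k t x)"
proof -
  have "2 * int (x ! i div 2) - int (x ! i) = - int (x ! i mod 2)" for i
    by presburger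
  moreover have "legal_question x (split_question k t x)"
    using assms by (auto simp: legal_question_def less_Suc_eq_le split_question_nth)
  ultimately show ?thesis
    using min_half_sum_bounds[where X = "x ! k", OF parity_weight_le[of k t x]]
    by (simp add: Suc_le_eq mod2_eq_if balanced_def imbalance_split_question split_question_nth)
qed

text \<open>reach k e r i counts the answer sequences of length r that take a chip in position i
  to exactly e lies left.\<close>

definition reach :: "nat \<Rightarrow> nat \<Rightarrow> nat \<Rightarrow> nat \<Rightarrow> int" where
  "reach k e r i = int (ichoose r (int k - int i - int e))"

lemma reach_Suc: "reach k e r i + reach k e r (Suc i) = reach k e (Suc r) i"
  using ichoose_Suc[of r "int k - int i - int e"] by (simp add: reach_def algebra_simps)

lemma lin_comb_reach_0:
  assumes "length x = Suc k" "e \<le> k"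
  shows "lin_comb (reach k e 0) x = int (x ! (k - e))"
proof -
  have "lin_comb (reach k e 0) x = (\<Sum>i<Suc k. if i = k - e then int (x ! i) else 0)"
    unfolding lin_comb_def reach_def using assms by (intro sum.cong) (auto simp: ichoose_def)
  then show ?thesis
    using assms by simp
qed

lemma lin_comb_reach:
  "length x = Suc k \<Longrightarrow>
    lin_comb (reach k e r) x = int (\<Sum>i<Suc k. x ! i * ichoose r (int k - int i - int e))"
  by (simp add: lin_comb_def reach_def)

lemma sum_reach_le: "(\<Sum>i<Suc k. reach k e r i) \<le> int (binom_le r k)"
proof -
  have "(\<Sum>i<Suc k. ichoose r (int k - int e - int i)) \<le> ibinom_le r (int k - int e)"
    by (rule sum_ichoose_le)
  also have "\<dots> \<le> binom_le r k"
    by (simp add: ibinom_le_def binom_le_mono)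
  finally show ?thesis
    by (simp add: reach_def algebra_simps flip: of_nat_sum)
qed

lemma lin_comb_reach_yes_state:
  assumes lx: "length x = Suc k" and a: "balanced k t x a"
  shows "\<bar>2 * lin_comb (reach k e r) (yes_state x a) - lin_comb (reach k e (Suc r)) x\<bar>
    \<le> int (binom_le (Suc r) k) + (if e = 0 then int (binom_le t k) else 0)"
proof -
  let ?d = "\<lambda>i. 2 * int (a ! i) - int (x ! i)"
  let ?h = "\<lambda>i. reach k e r i - reach k e r (Suc i)"
  have hi: "\<bar>?d i * ?h i\<bar> \<le> reach k e (Suc r) i" if "i < k" for i
  proof -
    have "\<bar>?d i\<bar> * \<bar>?h i\<bar> \<le> 1 * \<bar>?h i\<bar>"
      using a that by (intro mult_right_mono) (simp_all add: balanced_def)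
    moreover have "\<bar>?h i\<bar> \<le> reach k e (Suc r) i"
      using reach_Suc[of k e r i] by (simp add: reach_def)
    ultimately show ?thesis
      by (simp add: abs_mult)
  qed
  have hk: "\<bar>?d k * ?h k\<bar> \<le> (if e = 0 then int (binom_le t k) else 0)"
    using a by (simp add: balanced_def reach_def ichoose_def)
  have "(\<Sum>i<Suc k. \<bar>?d i * ?h i\<bar>)
      \<le> (\<Sum>i<k. reach k e (Suc r) i) + (if e = 0 then int (binom_le t k) else 0)"
    unfolding sum.lessThan_Suc using hi hk by (intro add_mono sum_mono) auto
  moreover have "(\<Sum>i<k. reach k e (Suc r) i) \<le> int (binom_le (Suc r) k)"
    using sum_reach_le[of k e "Suc r"] by (simp add: reach_def)
  moreover have "\<bar>\<Sum>i<Suc k. ?d i * ?h i\<bar> \<le> (\<Sum>i<Suc k. \<bar>?d i * ?h i\<bar>)"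
    by (rule sum_abs)
  ultimately have "\<bar>\<Sum>i<Suc k. ?d i * ?h i\<bar>
      \<le> int (binom_le (Suc r) k) + (if e = 0 then int (binom_le t k) else 0)"
    by linarith
  moreover have "(\<lambda>i. reach k e r i + reach k e r (Suc i)) = reach k e (Suc r)"
    by (rule ext) (rule reach_Suc)
  moreover have "reach k e r (Suc k) = 0"
    by (simp add: reach_def ichoose_def)
  ultimately show ?thesis
    using lin_comb_yes_state[of x k a "reach k e r", OF lx] a by (simp add: balanced_def)
qed

text \<open>An error g s made in the round with s rounds left enters the bounds for the state with
  t rounds left with the factor 2 ^ (t - s), since each round halves the state.\<close>

definition accrued :: "nat \<Rightarrow> nat \<Rightarrow> (nat \<Rightarrow> nat) \<Rightarrow> int" where
  "accrued \<tau> t g = (\<Sum>s\<in>{\<tau><..t}. int (g s) * 2 ^ (t - s))"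

lemma accrued_self [simp]: "accrued t t g = 0"
  by (simp add: accrued_def)

lemma accrued_Suc: "\<tau> \<le> t \<Longrightarrow> accrued \<tau> (Suc t) g = int (g (Suc t)) + 2 * accrued \<tau> t g"
proof -
  assume "\<tau> \<le> t"
  then have "{\<tau><..Suc t} = insert (Suc t) {\<tau><..t}"
    by auto
  moreover have "(\<Sum>s\<in>{\<tau><..t}. int (g s) * 2 ^ (Suc t - s)) = (\<Sum>s\<in>{\<tau><..t}. 2 * (int (g s) * 2 ^ (t - s)))"
    by (intro sum.cong) (auto simp: Suc_diff_le)
  ultimately show ?thesis
    by (simp add: accrued_def sum_distrib_left)
qed

lemma accrued_cong:
  "(\<And>s. \<tau> < s \<Longrightarrow> s \<le> t \<Longrightarrow> g s = h s) \<Longrightarrow> accrued \<tau> t g = accrued \<tau> t h"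
  unfolding accrued_def by (intro sum.cong) auto

lemma accrued_add: "accrued \<tau> t (\<lambda>s. g s + h s) = accrued \<tau> t g + accrued \<tau> t h"
  by (simp add: accrued_def sum.distrib algebra_simps)

lemma accrued_choose:
  "accrued \<tau> (\<tau> + n) (\<lambda>s. (m + (s - \<tau>) - 1) choose e) + int (binom_le (m + n) e)
    = 2 ^ n * int (binom_le m e)"
proof (induction n)
  case (Suc n)
  have "int (binom_le (m + Suc n) e) = 2 * int (binom_le (m + n) e) - int ((m + n) choose e)"
    using binom_le_double[of "m + n" e] by simp
  then show ?case
    using Suc accrued_Suc[of \<tau> "\<tau> + n"] by (simp add: algebra_simps)
qed simp

lemma accrued_binom_le:
  "accrued \<tau> (\<tau> + n) (\<lambda>s. binom_le (m + (s - \<tau>) - 1) k) \<le> 2 ^ n * (int k + 1) * int (binom_le m k)"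
proof -
  have "accrued \<tau> (\<tau> + n) (\<lambda>s. binom_le (m + (s - \<tau>) - 1) k)
      = (\<Sum>e\<le>k. accrued \<tau> (\<tau> + n) (\<lambda>s. (m + (s - \<tau>) - 1) choose e))"
    unfolding accrued_def binom_le_def by (simp add: sum_distrib_right sum.swap[of _ "{..k}"])
  also have "\<dots> \<le> (\<Sum>e\<le>k. 2 ^ n * int (binom_le m k))"
  proof (rule sum_mono)
    fix e assume "e \<in> {..k}"
    then have "2 ^ n * int (binom_le m e) \<le> 2 ^ n * int (binom_le m k)"
      by (simp add: binom_le_mono)
    then show "accrued \<tau> (\<tau> + n) (\<lambda>s. (m + (s - \<tau>) - 1) choose e) \<le> 2 ^ n * int (binom_le m k)"
      using accrued_choose[of \<tau> n m e] by linarith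
  qed
  finally show ?thesis
    by (simp add: algebra_simps)
qed

text \<open>The weight surplus needed for the first k rounds, before the chips without lies left
  are numerous enough to compensate for the parities.\<close>

fun reserve :: "nat \<Rightarrow> nat \<Rightarrow> nat \<Rightarrow> nat" where
  "reserve k n 0 = 0"
| "reserve k n (Suc u) = 2 * reserve k n u + binom_le (n + u) k"

text \<open>The third clause taken at
  t = \<tau> says that x ! k \<ge> binom_le (\<tau> - 1) k, which makes the questions of the rounds
  \<tau> \<le> q - k split the weight evenly up to 1; the fourth clause taken at t = T says that
  x ! i \<le> C for i < k.\<close>

definition split_invariant :: "nat \<Rightarrow> nat \<Rightarrow> nat \<Rightarrow> nat \<Rightarrow> nat \<Rightarrow> nat list \<Rightarrow> bool" where
  "split_invariant k q T C t x \<longleftrightarrow> length x = Suc k \<and>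
     2 ^ t + int (reserve k (q - k) (t - (q - k))) \<le> int (wt t x) \<and>
     (\<forall>\<tau>. T < \<tau> \<longrightarrow> \<tau> \<le> t \<longrightarrow> \<tau> \<le> q - k \<longrightarrow>
        2 ^ (t - \<tau>) * int (binom_le (\<tau> - 1) k) + accrued \<tau> t (\<lambda>s. binom_le (s - \<tau>) k + binom_le (s - 1) k)
          \<le> lin_comb (reach k 0 (t - \<tau>)) x) \<and>
     (\<forall>e. 1 \<le> e \<longrightarrow> e \<le> k \<longrightarrow>
        lin_comb (reach k e (t - T)) x + accrued T t (\<lambda>s. binom_le (s - T) k) \<le> 2 ^ (t - T) * int C)"

lemma split_invariant_weight_step:
  assumes inv: "split_invariant k q T C (Suc t) x" and T: "T \<le> t" and kq: "k \<le> q"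
    and a: "balanced k t x a"
  shows "2 ^ t + int (reserve k (q - k) (t - (q - k))) \<le> int (wt t (yes_state x a))"
proof -
  have lx: "length x = Suc k"
    using inv by (simp add: split_invariant_def)
  have w: "2 ^ Suc t + int (reserve k (q - k) (Suc t - (q - k))) \<le> int (wt (Suc t) x)"
    using inv by (simp add: split_invariant_def)
  have y: "2 * int (wt t (yes_state x a)) = int (wt (Suc t) x) + imbalance k t x a"
    using wt_yes_state[OF lx] a by (simp add: balanced_def)
  show ?thesis
  proof (cases "Suc t \<le> q - k")
    case True
    then have "int (binom_le t k) \<le> lin_comb (reach k 0 0) x"
      using inv T by (auto simp: split_invariant_def dest!: spec[of _ "Suc t"])
    then have "\<bar>imbalance k t x a\<bar> \<le> 1"
      using a lin_comb_reach_0[OF lx, of 0] by (simp add: balanced_def)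
    then have "2 * 2 ^ t \<le> 2 * int (wt t (yes_state x a)) + 1"
      using w y True by simp
    moreover have "\<And>P w :: int. 2 * P \<le> 2 * w + 1 \<Longrightarrow> P \<le> w"
      by presburger
    ultimately have "2 ^ t \<le> int (wt t (yes_state x a))"
      by blast
    then show ?thesis
      using True by simp
  next
    case False
    then have "Suc t - (q - k) = Suc (t - (q - k))" "q - k + (t - (q - k)) = t"
      by auto
    then show ?thesis
      using w y a by (simp add: balanced_def abs_le_iff; linarith)
  qed
qed

lemma split_invariant_step:
  assumes inv: "split_invariant k q T C (Suc t) x" and T: "T \<le> t" and kq: "k \<le> q"
    and a: "balanced k t x a"
  shows "split_invariant k q T C t (yes_state x a)"
  unfolding split_invariant_def
proof (intro conjI allI impI)
  let ?y = "yes_state x a"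
  have lx: "length x = Suc k"
    using inv by (simp add: split_invariant_def)
  then show "length ?y = Suc k" by simp
  show "2 ^ t + int (reserve k (q - k) (t - (q - k))) \<le> int (wt t ?y)"
    by (rule split_invariant_weight_step[OF inv T kq a])
  fix \<tau> assume \<tau>: "T < \<tau>" "\<tau> \<le> t" "\<tau> \<le> q - k"
  then have "Suc t - \<tau> = Suc (t - \<tau>)" by simp
  then have "2 ^ Suc (t - \<tau>) * int (binom_le (\<tau> - 1) k)
      + accrued \<tau> (Suc t) (\<lambda>s. binom_le (s - \<tau>) k + binom_le (s - 1) k)
      \<le> lin_comb (reach k 0 (Suc (t - \<tau>))) x"
    using inv \<tau> by (auto simp: split_invariant_def)
  then show "2 ^ (t - \<tau>) * int (binom_le (\<tau> - 1) k)
      + accrued \<tau> t (\<lambda>s. binom_le (s - \<tau>) k + binom_le (s - 1) k) \<le> lin_comb (reach k 0 (t - \<tau>)) ?y"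
    using lin_comb_reach_yes_state[OF lx a, of 0 "t - \<tau>"] accrued_Suc[OF \<tau>(2)] \<tau>
    by (simp add: Suc_diff_le mult.assoc; linarith)
next
  fix e assume e: "1 \<le> e" "e \<le> k"
  have lx: "length x = Suc k"
    using inv by (simp add: split_invariant_def)
  have "Suc t - T = Suc (t - T)" using T by simp
  then have "lin_comb (reach k e (Suc (t - T))) x + accrued T (Suc t) (\<lambda>s. binom_le (s - T) k)
      \<le> 2 ^ Suc (t - T) * int C"
    using inv e by (auto simp: split_invariant_def)
  then show "lin_comb (reach k e (t - T)) (yes_state x a) + accrued T t (\<lambda>s. binom_le (s - T) k)
      \<le> 2 ^ (t - T) * int C"
    using lin_comb_reach_yes_state[OF lx a, of e "t - T"] accrued_Suc[OF T] e T
    by (simp add: Suc_diff_le)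
qed

lemma paul_wins_split_invariant_end:
  assumes inv: "split_invariant k q T C T x" and T: "(2 * k + 1) * (k * C) \<le> T"
  shows "paul_wins T x"
proof (rule paul_wins_few_liars[OF _ _ T])
  show lx: "length x = Suc k"
    using inv by (simp add: split_invariant_def)
  have "(2::int) ^ T \<le> int (wt T x)"
    using inv unfolding split_invariant_def by linarith
  then show "2 ^ T \<le> wt T x"
    by (metis of_nat_le_iff of_nat_numeral of_nat_power)
  show "\<forall>i<k. x ! i \<le> C"
  proof (intro allI impI)
    fix i assume "i < k"
    then have "lin_comb (reach k (k - i) 0) x \<le> int C"
      using inv by (auto simp: split_invariant_def)
    then show "x ! i \<le> C"
      using lin_comb_reach_0[OF lx, of "k - i"] \<open>i < k\<close> by simp
  qed
qed

lemma paul_wins_split_invariant: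
  assumes "split_invariant k q T C t x" "T \<le> t" and kq: "k \<le> q" and T: "(2 * k + 1) * (k * C) \<le> T"
  shows "paul_wins t x"
  using assms(1,2)
proof (induction t arbitrary: x)
  case 0
  then show ?case
    using paul_wins_split_invariant_end[OF _ T] by simp
next
  case (Suc t)
  show ?case
  proof (cases "T = Suc t")
    case True
    then show ?thesis
      using paul_wins_split_invariant_end[OF _ T] Suc.prems(1) by simp
  next
    case False
    then have "T \<le> t"
      using Suc.prems(2) by simp
    have lx: "length x = Suc k"
      using Suc.prems(1) by (simp add: split_invariant_def)
    let ?a = "split_question k t x"
    have a: "balanced k t x ?a" "balanced k t x (map2 (-) x ?a)"
      using split_question_balanced[OF lx] balanced_complement[OF lx] by auto
    then have "legal_question x ?a"
      by (simp add: balanced_def)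
    moreover have "paul_wins t (yes_state x ?a)" "paul_wins t (no_state x ?a)"
      using Suc.IH[OF split_invariant_step[OF Suc.prems(1) \<open>T \<le> t\<close> kq] \<open>T \<le> t\<close>] a
        no_state_eq_yes_state_complement[OF \<open>legal_question x ?a\<close>] by simp_all
    ultimately show ?thesis
      by auto
  qed
qed

section \<open>The initial state\<close>

text \<open>The hypothesis on T handles \<tau> \<le> q / 2, the one on q handles larger \<tau>.\<close>

lemma pow_mult_pow_le_pow_mult_pow2:
  assumes T: "\<forall>n\<ge>T. (4 * k) ^ k * (4 * k + 4) * (n + 1) ^ k \<le> 2 ^ n"
    and q: "(k ^ k * (4 * k + 4))\<^sup>2 * (q + 1) ^ (4 * k) \<le> 2 ^ q"
    and e: "1 \<le> e" "e \<le> k" and \<tau>: "T < \<tau>" "\<tau> + k \<le> q"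
  shows "(k * (q + 1)) ^ e * ((4 * k + 4) * (\<tau> + 1) ^ k) \<le> (q - \<tau>) ^ e * 2 ^ \<tau>"
proof (cases "2 * \<tau> \<le> q")
  case True
  then have "q + 1 \<le> 4 * (q - \<tau>)"
    using \<tau> by simp
  then have "k * (q + 1) \<le> 4 * k * (q - \<tau>)"
    by (metis mult.assoc mult.left_commute mult_le_mono2)
  then have "(k * (q + 1)) ^ e \<le> (4 * k) ^ e * (q - \<tau>) ^ e"
    by (metis power_mono power_mult_distrib zero_le)
  also have "\<dots> \<le> (4 * k) ^ k * (q - \<tau>) ^ e"
    using e by (intro mult_right_mono power_increasing) auto
  finally have "(k * (q + 1)) ^ e * ((4 * k + 4) * (\<tau> + 1) ^ k)
      \<le> (q - \<tau>) ^ e * ((4 * k) ^ k * (4 * k + 4) * (\<tau> + 1) ^ k)"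
    by (simp add: mult_right_mono mult_ac)
  also have "\<dots> \<le> (q - \<tau>) ^ e * 2 ^ \<tau>"
    using T \<tau> by (intro mult_left_mono) auto
  finally show ?thesis .
next
  case False
  have "(k * (q + 1)) ^ e * ((4 * k + 4) * (\<tau> + 1) ^ k) \<le> (k * (q + 1)) ^ k * ((4 * k + 4) * (q + 1) ^ k)"
    using e \<tau> by (intro mult_mono power_increasing power_mono) auto
  also have "\<dots> = k ^ k * (4 * k + 4) * (q + 1) ^ (2 * k)"
  proof -
    have "(q + 1) ^ (2 * k) = (q + 1) ^ k * (q + 1) ^ k"
      by (simp only: mult_2 power_add)
    then show ?thesis
      by (simp only: power_mult_distrib mult_ac)
  qed
  also have "\<dots> \<le> 2 ^ \<tau>"
  proof (rule power2_le_imp_le)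
    have "(k ^ k * (4 * k + 4) * (q + 1) ^ (2 * k))\<^sup>2 = (k ^ k * (4 * k + 4))\<^sup>2 * (q + 1) ^ (4 * k)"
      by (simp add: power_mult_distrib power_mult[symmetric] mult.commute)
    also have "\<dots> \<le> (2 ^ \<tau>)\<^sup>2"
      using q False by (simp add: power_mult[symmetric] mult.commute le_trans)
    finally show "(k ^ k * (4 * k + 4) * (q + 1) ^ (2 * k))\<^sup>2 \<le> (2 ^ \<tau>)\<^sup>2" .
  qed simp
  also have "\<dots> \<le> (q - \<tau>) ^ e * 2 ^ \<tau>"
    using e \<tau> by simp
  finally show ?thesis .
qed

lemma binom_le_times_le_choose_times_pow2:
  assumes T: "\<forall>n\<ge>T. (4 * k) ^ k * (4 * k + 4) * (n + 1) ^ k \<le> 2 ^ n"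
    and q: "(k ^ k * (4 * k + 4))\<^sup>2 * (q + 1) ^ (4 * k) \<le> 2 ^ q"
    and e: "e \<le> k" and \<tau>: "T < \<tau>" "\<tau> + k \<le> q"
  shows "binom_le q e * ((4 * k + 4) * binom_le \<tau> k) \<le> ((q - \<tau>) choose e) * 2 ^ \<tau>"
proof -
  have B: "(4 * k + 4) * binom_le \<tau> k \<le> (4 * k + 4) * (\<tau> + 1) ^ k"
    using binom_le_le_pow[of \<tau> k] by simp
  show ?thesis
  proof (cases "e = 0")
    case True
    have "(4 * k + 4) * (\<tau> + 1) ^ k \<le> (4 * k) ^ k * (4 * k + 4) * (\<tau> + 1) ^ k"
      by (cases k) auto
    also have "\<dots> \<le> 2 ^ \<tau>"
      using T \<tau> by simp
    finally have "(4 * k + 4) * binom_le \<tau> k \<le> 2 ^ \<tau>"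
      using B by linarith
    then show ?thesis
      using True by simp
  next
    case False
    then have e1: "1 \<le> e" and k1: "1 \<le> k"
      using e by auto
    have "binom_le q e * ((4 * k + 4) * binom_le \<tau> k) * k ^ e
        \<le> (q + 1) ^ e * ((4 * k + 4) * (\<tau> + 1) ^ k) * k ^ e"
      using binom_le_le_pow[of q e] B by (intro mult_mono) auto
    also have "\<dots> = (k * (q + 1)) ^ e * ((4 * k + 4) * (\<tau> + 1) ^ k)"
      by (simp only: power_mult_distrib[of k "q + 1" e] mult_ac)
    also have "\<dots> \<le> (q - \<tau>) ^ e * 2 ^ \<tau>"
      by (rule pow_mult_pow_le_pow_mult_pow2[OF T q e1 e \<tau>])
    also have "\<dots> \<le> k ^ e * ((q - \<tau>) choose e) * 2 ^ \<tau>"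
      using pow_le_pow_mult_choose[of e k "q - \<tau>"] e1 e \<tau> by simp
    finally show ?thesis
      using k1 by (simp add: mult_ac)
  qed
qed

lemma choose_times_pow2_le_binom_le:
  assumes "1 \<le> e'" "e' \<le> e" "e \<le> k" "k \<le> q" and q: "2 ^ (T + 1) * k ^ k \<le> q"
  shows "((q - T) choose (e - e')) * 2 ^ (T + 1) \<le> binom_le q e"
proof (cases "e - e' \<le> q - T")
  case True
  have k1: "1 \<le> k" using assms by simp
  have "(q - T) choose (e - e') \<le> (q - T) ^ (e - e')"
    by (rule binomial_le_pow[OF True])
  also have "\<dots> \<le> q ^ (e - e')"
    by (simp add: power_mono)
  also have "\<dots> \<le> q ^ (e - 1)"
    using assms by (intro power_increasing) auto
  finally have "((q - T) choose (e - e')) * 2 ^ (T + 1) * k ^ e \<le> q ^ (e - 1) * (2 ^ (T + 1) * k ^ k)"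
    using assms k1 by (simp add: mult_mono power_increasing mult.assoc)
  also have "\<dots> \<le> q ^ (e - 1) * q"
    using q by simp
  also have "\<dots> = q ^ e"
    using assms by (cases e) (simp_all add: mult.commute)
  also have "\<dots> \<le> k ^ e * (q choose e)"
    using pow_le_pow_mult_choose[of e k q] assms by simp
  also have "\<dots> \<le> k ^ e * binom_le q e"
    by (simp add: binom_le_def member_le_sum)
  finally show ?thesis
    using k1 by (simp add: mult.commute)
qed (simp add: binomial_eq_0)

lemma wt_eq_sum: "length x = Suc k \<Longrightarrow> wt q x = (\<Sum>i<Suc k. x ! i * binom_le q (k - i))"
  by (simp add: wt_def)

lemma split_invariant_initial_lower:
  assumes T: "\<forall>n\<ge>T. (4 * k) ^ k * (4 * k + 4) * (n + 1) ^ k \<le> 2 ^ n"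
    and q: "(k ^ k * (4 * k + 4))\<^sup>2 * (q + 1) ^ (4 * k) \<le> 2 ^ q"
    and lx: "length x = Suc k" and w: "2 ^ q \<le> wt q x" and \<tau>: "T < \<tau>" "\<tau> \<le> q - k"
  shows "2 ^ (q - \<tau>) * int (binom_le (\<tau> - 1) k) + accrued \<tau> q (\<lambda>s. binom_le (s - \<tau>) k + binom_le (s - 1) k)
    \<le> lin_comb (reach k 0 (q - \<tau>)) x"
proof -
  define j where "j = q - \<tau>"
  define B where "B = int (binom_le \<tau> k)"
  have qj: "q = \<tau> + j"
    using \<tau> by (simp add: j_def)
  have "accrued \<tau> q (\<lambda>s. binom_le (s - \<tau>) k) = accrued \<tau> (\<tau> + j) (\<lambda>s. binom_le (1 + (s - \<tau>) - 1) k)"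
    by (simp add: qj)
  also have "\<dots> \<le> 2 ^ j * (int k + 1) * int (binom_le 1 k)"
    by (rule accrued_binom_le)
  also have "\<dots> \<le> 2 ^ j * (int k + 1) * 2"
    using binom_le_1_le[of k] by (intro mult_left_mono) auto
  also have "\<dots> \<le> 2 ^ j * (int k + 1) * 2 * B"
    using mult_left_mono[of 1 B "2 ^ j * (int k + 1) * 2"] by (simp add: B_def Suc_le_eq)
  finally have s1: "accrued \<tau> q (\<lambda>s. binom_le (s - \<tau>) k) \<le> 2 ^ j * (int k + 1) * 2 * B" .
  have "accrued \<tau> q (\<lambda>s. binom_le (s - 1) k) = accrued \<tau> (\<tau> + j) (\<lambda>s. binom_le (\<tau> + (s - \<tau>) - 1) k)"
    unfolding qj by (intro accrued_cong) simp
  also have "\<dots> \<le> 2 ^ j * (int k + 1) * B"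
    unfolding B_def by (rule accrued_binom_le)
  finally have s2: "accrued \<tau> q (\<lambda>s. binom_le (s - 1) k) \<le> 2 ^ j * (int k + 1) * B" .
  have "(2::int) ^ j * int (binom_le (\<tau> - 1) k) \<le> 2 ^ j * B"
    by (simp add: B_def binom_le_mono)
  moreover have "0 \<le> int k * B * 2 ^ j"
    by (simp add: B_def)
  moreover have "2 ^ j * (4 * int k + 4) * B
      = 2 ^ j * B + 2 ^ j * (int k + 1) * 2 * B + 2 ^ j * (int k + 1) * B + int k * B * 2 ^ j"
    by (simp add: algebra_simps)
  ultimately have "2 ^ j * int (binom_le (\<tau> - 1) k)
      + accrued \<tau> q (\<lambda>s. binom_le (s - \<tau>) k + binom_le (s - 1) k)
      \<le> 2 ^ j * (4 * int k + 4) * B"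
    using s1 s2 unfolding accrued_add by linarith
  also have "\<dots> \<le> lin_comb (reach k 0 j) x"
  proof -
    have "2 ^ \<tau> * (2 ^ j * (4 * k + 4) * binom_le \<tau> k) \<le> wt q x * ((4 * k + 4) * binom_le \<tau> k)"
      using w by (simp add: qj power_add)
    also have "\<dots> = (\<Sum>i<Suc k. x ! i * (binom_le q (k - i) * ((4 * k + 4) * binom_le \<tau> k)))"
      unfolding wt_eq_sum[OF lx] by (simp only: sum_distrib_right mult.assoc)
    also have "\<dots> \<le> (\<Sum>i<Suc k. x ! i * ((j choose (k - i)) * 2 ^ \<tau>))"
      using binom_le_times_le_choose_times_pow2[OF T q _ \<tau>(1)] \<tau> unfolding j_def
      by (intro sum_mono mult_left_mono) auto
    also have "\<dots> = 2 ^ \<tau> * (\<Sum>i<Suc k. x ! i * ichoose j (int k - int i - int 0))"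
      by (simp add: sum_distrib_left ichoose_def nat_diff_distrib algebra_simps)
    finally have "2 ^ j * (4 * k + 4) * binom_le \<tau> k
        \<le> (\<Sum>i<Suc k. x ! i * ichoose j (int k - int i - int 0))"
      by simp
    then have "int (2 ^ j * (4 * k + 4) * binom_le \<tau> k) \<le> lin_comb (reach k 0 j) x"
      unfolding lin_comb_reach[OF lx] by (simp only: of_nat_le_iff)
    then show ?thesis
      by (simp add: B_def)
  qed
  finally show ?thesis
    by (simp add: j_def)
qed

lemma split_invariant_initial_upper:
  assumes q: "2 ^ (T + 1) * k ^ k \<le> q" "T + k \<le> q"
    and lx: "length x = Suc k" and w: "wt q x \<le> 2 ^ (q + 1)" and e: "1 \<le> e" "e \<le> k"
  shows "lin_comb (reach k e (q - T)) x + accrued T q (\<lambda>s. binom_le (s - T) k)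
    \<le> 2 ^ (q - T) * int (2 * k + 3)"
proof -
  define j where "j = q - T"
  have qj: "q = T + j"
    using q by (simp add: j_def)
  have "accrued T q (\<lambda>s. binom_le (s - T) k) = accrued T (T + j) (\<lambda>s. binom_le (1 + (s - T) - 1) k)"
    by (simp add: qj)
  also have "\<dots> \<le> 2 ^ j * (int k + 1) * int (binom_le 1 k)"
    by (rule accrued_binom_le)
  also have "\<dots> \<le> 2 ^ j * (int k + 1) * 2"
    using binom_le_1_le[of k] by (intro mult_left_mono) auto
  finally have s: "accrued T q (\<lambda>s. binom_le (s - T) k) \<le> 2 ^ j * (int k + 1) * 2" .
  have "2 ^ (T + 1) * (\<Sum>i<Suc k. x ! i * ichoose j (int k - int i - int e))
      = (\<Sum>i<Suc k. x ! i * (ichoose j (int k - int i - int e) * 2 ^ (T + 1)))"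
    by (simp add: sum_distrib_left algebra_simps)
  also have "\<dots> \<le> (\<Sum>i<Suc k. x ! i * binom_le q (k - i))"
  proof (intro sum_mono mult_left_mono)
    fix i assume "i \<in> {..<Suc k}"
    then show "ichoose j (int k - int i - int e) * 2 ^ (T + 1) \<le> binom_le q (k - i)"
      using choose_times_pow2_le_binom_le[of e "k - i" k q T] e q
      by (auto simp: ichoose_def j_def nat_diff_distrib)
  qed simp
  also have "\<dots> \<le> 2 ^ (T + 1) * 2 ^ j"
    using w by (simp add: wt_eq_sum[OF lx] qj power_add mult_ac)
  finally have "(\<Sum>i<Suc k. x ! i * ichoose j (int k - int i - int e)) \<le> 2 ^ j"
    by simp
  then have "lin_comb (reach k e j) x \<le> int (2 ^ j)"
    unfolding lin_comb_reach[OF lx] by (simp only: of_nat_le_iff)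
  with s show ?thesis
    by (simp add: j_def algebra_simps)
qed

lemma split_invariant_initial:
  assumes T: "\<forall>n\<ge>T. (4 * k) ^ k * (4 * k + 4) * (n + 1) ^ k \<le> 2 ^ n"
    and q: "(k ^ k * (4 * k + 4))\<^sup>2 * (q + 1) ^ (4 * k) \<le> 2 ^ q" "2 ^ (T + 1) * k ^ k \<le> q" "T + k \<le> q"
    and lx: "length x = Suc k" and w: "2 ^ q + reserve k (q - k) k \<le> wt q x" "wt q x \<le> 2 ^ (q + 1)"
  shows "split_invariant k q T (2 * k + 3) q x"
proof -
  have "int (2 ^ q + reserve k (q - k) k) \<le> int (wt q x)"
    using w(1) by (simp only: of_nat_le_iff)
  moreover have "q - (q - k) = k"
    using q(3) by simp
  moreover have "2 ^ q \<le> wt q x"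
    using w(1) by simp
  ultimately show ?thesis
    using split_invariant_initial_lower[OF T q(1) lx] split_invariant_initial_upper[OF q(2,3) lx w(2)] lx
    by (simp add: split_invariant_def)
qed

lemma reserve_le: "n + u \<le> m \<Longrightarrow> reserve k n u + binom_le m k \<le> 2 ^ u * binom_le m k"
proof (induction u)
  case (Suc u)
  then have "binom_le (n + u) k \<le> binom_le m k"
    by (intro binom_le_mono) simp_all
  then show ?case
    using Suc by simp
qed simp

lemma wt_remove_chip:
  assumes lx: "length x = Suc k" and i: "i \<le> k" "0 < x ! i"
  shows "wt q (x[i := x ! i - 1]) + binom_le q (k - i) = wt q x"
proof -
  have "wt q (x[i := x ! i - 1]) + binom_le q (k - i)
      = (\<Sum>j<Suc k. x[i := x ! i - 1] ! j * binom_le q (k - j) + (if j = i then binom_le q (k - j) else 0))"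
    using lx i by (simp add: wt_eq_sum sum.distrib)
  also have "\<dots> = wt q x"
    using lx i by (auto simp: wt_eq_sum nth_list_update mult_eq_if intro!: sum.cong)
  finally show ?thesis .
qed

lemma exists_smaller_state_wt_between:
  assumes "length x = Suc k" "A \<le> wt q x"
  shows "\<exists>y. length y = Suc k \<and> (\<forall>i<Suc k. y ! i \<le> x ! i) \<and> A \<le> wt q y \<and> wt q y \<le> A + binom_le q k"
  using assms
proof (induction "wt q x" arbitrary: x rule: less_induct)
  case less
  show ?case
  proof (cases "wt q x \<le> A + binom_le q k")
    case False
    have "\<exists>i\<le>k. 0 < x ! i"
    proof (rule ccontr)
      assume "\<not> (\<exists>i\<le>k. 0 < x ! i)"
      then have "wt q x = 0"
        using less.prems(1) by (simp add: wt_eq_sum)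
      then show False using False by simp
    qed
    then obtain i where i: "i \<le> k" "0 < x ! i" by blast
    let ?x = "x[i := x ! i - 1]"
    have "wt q ?x + binom_le q (k - i) = wt q x"
      by (rule wt_remove_chip[OF less.prems(1) i])
    moreover have "binom_le q (k - i) \<le> binom_le q k"
      by (simp add: binom_le_mono)
    ultimately obtain y where y: "length y = Suc k" "\<forall>j<Suc k. y ! j \<le> ?x ! j" "A \<le> wt q y"
        "wt q y \<le> A + binom_le q k"
      using less.hyps[of ?x] less.prems(1) False binom_le_pos[of q "k - i"] by fastforce
    moreover have "?x ! j \<le> x ! j" for j
      using less.prems(1) i by (cases "j = i") auto
    ultimately show ?thesis
      by (meson order_trans)
  qed (use less.prems in blast)
qed

lemma paul_wins_wt_ge:
  assumes T: "\<forall>n\<ge>T. (4 * k) ^ k * (4 * k + 4) * (n + 1) ^ k \<le> 2 ^ n" "(2 * k + 1) * (k * (2 * k + 3)) \<le> T"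
    and q: "(k ^ k * (4 * k + 4))\<^sup>2 * (q + 1) ^ (4 * k) \<le> 2 ^ q" "2 ^ (T + 1) * k ^ k \<le> q" "T + k \<le> q"
      "2 ^ k * (q + 1) ^ k \<le> 2 ^ q"
    and lx: "length x = Suc k" and w: "2 ^ q + reserve k (q - k) k \<le> wt q x"
  shows "paul_wins q x"
proof -
  obtain y where y: "length y = Suc k" "\<forall>i<Suc k. y ! i \<le> x ! i"
      "2 ^ q + reserve k (q - k) k \<le> wt q y" "wt q y \<le> 2 ^ q + reserve k (q - k) k + binom_le q k"
    using exists_smaller_state_wt_between[OF lx w] by blast
  have "reserve k (q - k) k + binom_le q k \<le> 2 ^ k * binom_le q k"
    using q(3) by (intro reserve_le) simp
  also have "\<dots> \<le> 2 ^ q"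
    using binom_le_le_pow[of q k] q(4) by (meson le_trans mult_le_mono2)
  finally have "wt q y \<le> 2 ^ (q + 1)"
    using y(4) by simp
  then have "split_invariant k q T (2 * k + 3) q y"
    using split_invariant_initial[OF T(1) q(1-3) y(1,3)] by simp
  then have "paul_wins q y"
    using paul_wins_split_invariant[OF _ _ _ T(2)] q(3) by simp
  then show ?thesis
    using paul_wins_mono[of q y x] y(1,2) lx by simp
qed

lemma reserve_le_choose: "2 * k \<le> q \<Longrightarrow> reserve k (q - k) k \<le> 2 ^ k * (k + 1) * (q choose k)"
proof -
  assume q: "2 * k \<le> q"
  have "reserve k (q - k) k \<le> 2 ^ k * binom_le q k"
    using reserve_le[of "q - k" k q k] q by simp
  also have "\<dots> \<le> 2 ^ k * ((k + 1) * (q choose k))"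
    using binom_le_le_choose[OF q] by simp
  finally show ?thesis
    by (simp only: mult.assoc)
qed

theorem theorem8:
  fixes k :: nat
  shows "\<exists>(c1::real) (qstar::nat). \<forall>q\<ge>qstar. \<forall>x::nat list.
           length x = k + 1 \<longrightarrow>
           real (wt q x) \<ge> 2 ^ q + c1 * real (q choose k) \<longrightarrow>
           paul_wins q x"
proof -
  have "\<forall>\<^sub>F n in sequentially.
      (4 * k) ^ k * (4 * k + 4) * (n + 1) ^ k \<le> 2 ^ n \<and> (2 * k + 1) * (k * (2 * k + 3)) \<le> n"
    by (intro eventually_conj eventually_poly_le_pow2 eventually_ge_at_top)
  then obtain T where T: "\<forall>n\<ge>T. (4 * k) ^ k * (4 * k + 4) * (n + 1) ^ k \<le> 2 ^ n"
      "(2 * k + 1) * (k * (2 * k + 3)) \<le> T"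
    unfolding eventually_sequentially by auto
  have "\<forall>\<^sub>F q in sequentially. (k ^ k * (4 * k + 4))\<^sup>2 * (q + 1) ^ (4 * k) \<le> 2 ^ q \<and>
      2 ^ (T + 1) * k ^ k \<le> q \<and> T + 2 * k \<le> q \<and> 2 ^ k * (q + 1) ^ k \<le> 2 ^ q"
    by (intro eventually_conj eventually_poly_le_pow2 eventually_ge_at_top)
  then obtain q0 where q0: "\<forall>q\<ge>q0. (k ^ k * (4 * k + 4))\<^sup>2 * (q + 1) ^ (4 * k) \<le> 2 ^ q \<and>
      2 ^ (T + 1) * k ^ k \<le> q \<and> T + 2 * k \<le> q \<and> 2 ^ k * (q + 1) ^ k \<le> 2 ^ q"
    unfolding eventually_sequentially by auto
  show ?thesis
  proof (intro exI allI impI)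
    fix q x
    assume "q0 \<le> q" and lx: "length x = k + 1"
      and w: "2 ^ q + real (2 ^ k * (k + 1)) * real (q choose k) \<le> real (wt q x)"
    then have q: "(k ^ k * (4 * k + 4))\<^sup>2 * (q + 1) ^ (4 * k) \<le> 2 ^ q" "2 ^ (T + 1) * k ^ k \<le> q"
        "T + 2 * k \<le> q" "2 ^ k * (q + 1) ^ k \<le> 2 ^ q"
      using q0 by auto
    then have "real (reserve k (q - k) k) \<le> real (2 ^ k * (k + 1)) * real (q choose k)"
      using reserve_le_choose[of k q] by (metis le_add2 le_trans of_nat_le_iff of_nat_mult)
    then have "real (2 ^ q + reserve k (q - k) k) \<le> real (wt q x)"
      using w by simp
    then have "2 ^ q + reserve k (q - k) k \<le> wt q x"
      by (simp only: of_nat_le_iff)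
    then show "paul_wins q x"
      using paul_wins_wt_ge[OF T q(1,2) _ q(4)] q(3) lx by simp
  qed
qed

end
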